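(* Let $d\ge2$ be an integer and $\delta\in(0,d]$ real. Let $P$ be a set of $n$ points in $\mathbb{R}^d$ with $\dim_{\mathsf f}(P)=\delta$ and let $D=\{\mathrm{ball}(x,1):x\in P\}$. Let $D'\subseteq D$ consist of $k$ pairwise disjoint balls. Then there exist $c\in\mathbb{R}^d$ and $r>0$ such that at most $H$ balls of $D'$ intersect $\mathrm{sphere}(c,r)$, and at most $(1-2^{-O(d)})k$ balls of $D'$ are contained in the interior of $\mathrm{sphere}(c,r)$ and at most $(1-2^{-O(d)})k$ in its exterior, where $H=O(k^{1-1/\delta})$ if $\delta>1$ and $H=O(1)$ if $\delta\le1$.
   Context: $\mathrm{ball}(x,r)$ and $\mathrm{sphere}(x,r)$ denote the closed Euclidean ball and the sphere of radius $r$ centered at $x$. Fractal dimension: for a family of finite pointsets $P\subseteq\mathbb{R}^d$ (with $|P|$ unbounded), $\dim_{\mathsf f}(P)$ is the infimum of $\delta$ such that there is a constant $c_0$ with: for every member $P$, every $\varepsilon>0$, every $r\ge2\varepsilon$, every $\varepsilon$-net $N$ of $P$ (a subset of $P$ whose points are pairwise at distance $\ge\varepsilon$ and such that every point of $P$ is within distance $\varepsilon$ of $N$) and every $x$, $|N\cap\mathrm{ball}(x,r)|\le c_0(r/\varepsilon)^\delta$. Hidden constants may depend on $d,\delta,c_0$. *)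

theory Defs
  imports Complex_Main
begin

text \<open>Points of R^d are modelled as functions nat => real vanishing outside {..<d},
  so that the dimension d can be quantified inside the statement.\<close>

definition Rd :: "nat \<Rightarrow> (nat \<Rightarrow> real) set" where
  "Rd d = {x. \<forall>i\<ge>d. x i = 0}"

definition edist :: "nat \<Rightarrow> (nat \<Rightarrow> real) \<Rightarrow> (nat \<Rightarrow> real) \<Rightarrow> real" where
  "edist d x y = sqrt (\<Sum>i<d. (x i - y i)^2)"

definition eball :: "nat \<Rightarrow> (nat \<Rightarrow> real) \<Rightarrow> real \<Rightarrow> (nat \<Rightarrow> real) set" where
  "eball d x r = {y \<in> Rd d. edist d x y \<le> r}"

definition esphere :: "nat \<Rightarrow> (nat \<Rightarrow> real) \<Rightarrow> real \<Rightarrow> (nat \<Rightarrow> real) set" where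
  "esphere d x r = {y \<in> Rd d. edist d x y = r}"

definition is_net :: "nat \<Rightarrow> real \<Rightarrow> (nat \<Rightarrow> real) set \<Rightarrow> (nat \<Rightarrow> real) set \<Rightarrow> bool" where
  "is_net d eps N P \<longleftrightarrow> N \<subseteq> P \<and>
     (\<forall>p\<in>N. \<forall>q\<in>N. p \<noteq> q \<longrightarrow> edist d p q \<ge> eps) \<and>
     (\<forall>p\<in>P. \<exists>q\<in>N. edist d p q \<le> eps)"

definition frac_dim_bound :: "nat \<Rightarrow> real \<Rightarrow> real \<Rightarrow> (nat \<Rightarrow> real) set \<Rightarrow> bool" where
  "frac_dim_bound d \<delta> c0 P \<longleftrightarrow>
     (\<forall>eps r N x. eps > 0 \<longrightarrow> r \<ge> 2 * eps \<longrightarrow> is_net d eps N P \<longrightarrow> x \<in> Rd d \<longrightarrow>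
        real (card (N \<inter> eball d x r)) \<le> c0 * (r / eps) powr \<delta>)"

end

theory Submission
  imports Defs "HOL-Analysis.Ball_Volume"
begin

text \<open>Let k be the number of centres. Choose m \<approx> k / (2 \<cdot> 16^d) and the smallest radius r0 such
  that some ball B(c, r0) centred at a centre contains m centres. Covering B(c, 2 r0 + 1) by an
  (r0/2)-net, which has at most 16^d points by a volume argument, and using the minimality of r0,
  that ball holds at most 16^d (m - 1) \<le> k/2 centres. So for every r \<in> [r0, 2 r0] at most k/2 balls
  lie inside sphere(c, r) and at most k - m outside. A unit ball meeting the sphere has its centre
  in the shell | |x - c| - r | \<le> 1, and among the r0/3 disjoint such shells one carries at most a
  3/r0 fraction of those k/2 centres. The fractal dimension bound gives m \<le> c0 (r0/2)^\<delta>, i.e.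
  r0 \<ge> (k/c0)^(1/\<delta>) up to constants, hence O(k^(1-1/\<delta>)) hits when \<delta> > 1; when \<delta> \<le> 1 the bound
  c0 r0 for the whole ball B(c, 2 r0 + 1) already gives O(1) hits. If k \<le> 2 \<cdot> 16^d, the sphere
  of radius 1/2 around a single centre will do.\<close>

definition separated :: "nat \<Rightarrow> real \<Rightarrow> (nat \<Rightarrow> real) set \<Rightarrow> bool" where
  "separated d s U \<longleftrightarrow> (\<forall>x\<in>U. \<forall>y\<in>U. x \<noteq> y \<longrightarrow> s \<le> edist d x y)"

lemma edist_self [simp]: "edist d x x = 0"
  by (simp add: edist_def)

lemma edist_commute: "edist d x y = edist d y x"
  by (simp add: edist_def power2_commute)

lemma edist_triangle: "edist d x z \<le> edist d x y + edist d y z"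
proof -
  have "edist d x z = L2_set (\<lambda>i. (x i - y i) + (y i - z i)) {..<d}"
    by (simp add: edist_def L2_set_def)
  also have "\<dots> \<le> L2_set (\<lambda>i. x i - y i) {..<d} + L2_set (\<lambda>i. y i - z i) {..<d}"
    by (rule L2_set_triangle_ineq)
  finally show ?thesis
    by (simp add: edist_def L2_set_def)
qed

lemma centre_in_eball: "x \<in> Rd d \<Longrightarrow> 0 \<le> r \<Longrightarrow> x \<in> eball d x r"
  by (simp add: eball_def)

lemma edist_midpoint: "edist d x (\<lambda>i. (x i + y i) / 2) = edist d x y / 2"
proof -
  have "(\<Sum>i<d. (x i - (x i + y i) / 2)\<^sup>2) = (\<Sum>i<d. (x i - y i)\<^sup>2) / 2\<^sup>2"
    by (simp add: sum_divide_distrib power2_eq_square field_simps)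
  moreover have "sqrt (s / 2\<^sup>2) = sqrt s / 2" for s :: real
    by (simp only: real_sqrt_divide real_sqrt_abs abs_numeral)
  ultimately show ?thesis
    by (simp only: edist_def)
qed

lemma edist_gt_if_disjoint_eballs:
  assumes "x \<in> Rd d" "y \<in> Rd d" "eball d x r \<inter> eball d y r = {}"
  shows "2 * r < edist d x y"
proof (rule ccontr)
  assume far: "\<not> 2 * r < edist d x y"
  define z where "z = (\<lambda>i. (x i + y i) / 2)"
  have "z \<in> Rd d"
    using assms(1,2) by (simp add: Rd_def z_def)
  moreover have "edist d x z \<le> r" "edist d y z \<le> r"
    using far edist_midpoint[of d x y] edist_midpoint[of d y x]
    by (simp_all add: z_def add.commute edist_commute[of d y x])
  ultimately show False
    using assms(3) by (auto simp: eball_def)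
qed

lemma separated_if_disjoint_unit_eballs:
  assumes "Q \<subseteq> Rd d" "\<forall>x\<in>Q. \<forall>y\<in>Q. x \<noteq> y \<longrightarrow> eball d x 1 \<inter> eball d y 1 = {}"
  shows "separated d 2 Q"
  using assms edist_gt_if_disjoint_eballs[of _ d _ 1]
  unfolding separated_def by (metis less_eq_real_def mult.right_neutral subsetD)

lemma PiM_lborel_translation:
  fixes t :: "'i \<Rightarrow> real"
  assumes "finite I"
  shows "distr (PiM I (\<lambda>_. lborel)) (PiM I (\<lambda>_. lborel)) (\<lambda>f. \<lambda>i\<in>I. f i - t i)
    = PiM I (\<lambda>_. lborel)"
proof -
  interpret product_sigma_finite "\<lambda>_::'i. lborel :: real measure"
    by standard
  have meas: "(\<lambda>f. \<lambda>i\<in>I. f i - t i)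
      \<in> measurable (PiM I (\<lambda>_. lborel)) (PiM I (\<lambda>_. lborel :: real measure))"
    by measurable
  show ?thesis
  proof (rule PiM_eqI)
    fix A assume A: "\<And>i. i \<in> I \<Longrightarrow> A i \<in> sets (lborel :: real measure)"
    have preimage: "(\<lambda>f. \<lambda>i\<in>I. f i - t i) -` PiE I A \<inter> space (PiM I (\<lambda>_. lborel))
        = PiE I (\<lambda>i. (\<lambda>x. x - t i) -` A i)"
      by (auto simp: space_PiM PiE_iff extensional_def)
    have sets: "(\<lambda>x. x - t i) -` A i \<in> sets lborel" if "i \<in> I" for i
      using measurable_sets[of "\<lambda>x. x - t i" lborel borel "A i"] A[OF that] by simp
    have "emeasure lborel ((\<lambda>x. x - t i) -` A i) = emeasure lborel (A i)" if "i \<in> I" for i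
    proof -
      have "emeasure lborel (A i) = emeasure (distr lborel borel ((+) (- t i))) (A i)"
        by (simp add: lborel_distr_plus)
      also have "\<dots> = emeasure lborel ((\<lambda>x. x - t i) -` A i)"
        using A[OF that] by (subst emeasure_distr) (auto simp: vimage_def)
      finally show ?thesis ..
    qed
    then show "emeasure (distr (PiM I (\<lambda>_. lborel)) (PiM I (\<lambda>_. lborel))
        (\<lambda>f. \<lambda>i\<in>I. f i - t i)) (PiE I A) = (\<Prod>i\<in>I. emeasure lborel (A i))"
      using A sets assms
      by (subst emeasure_distr[OF meas])
        (auto simp: preimage emeasure_PiM sets_PiM_I_finite intro!: prod.cong)
  qed (use assms in simp_all)
qed

lemma emeasure_edist_ball:
  assumes "0 < \<rho>"
  shows "emeasure (PiM {..<d} (\<lambda>_. lborel)) {f \<in> space (PiM {..<d} (\<lambda>_. lborel)). edist d t f \<le> \<rho>}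
    = ennreal (unit_ball_vol d * \<rho> ^ d)"
proof -
  let ?M = "PiM {..<d} (\<lambda>_. lborel :: real measure)"
  let ?shift = "\<lambda>f. \<lambda>i\<in>{..<d}. f i - t i"
  let ?B = "{f. sqrt (\<Sum>i<d. (f i)\<^sup>2) \<le> \<rho>} \<inter> space ?M"
  have "?B \<in> sets ?M"
    by measurable
  moreover have "?shift -` ?B \<inter> space ?M = {f \<in> space ?M. edist d t f \<le> \<rho>}"
    by (auto simp: edist_def space_PiM power2_commute)
  ultimately have "emeasure ?M {f \<in> space ?M. edist d t f \<le> \<rho>} = emeasure (distr ?M ?M ?shift) ?B"
    by (subst emeasure_distr) (auto simp del: space_PiM)
  also have "\<dots> = ennreal (unit_ball_vol d * \<rho> ^ d)"
    using emeasure_cball_aux[of "{..<d}" \<rho>] assms by (simp add: PiM_lborel_translation)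
  finally show ?thesis .
qed

lemma card_separated_in_ball_le:
  assumes "finite T" "\<forall>t\<in>T. edist d c t \<le> R" "separated d s T" "0 < s" "0 \<le> R"
  shows "real (card T) * (s/3) ^ d \<le> (R + s/3) ^ d"
proof -
  let ?M = "PiM {..<d} (\<lambda>_. lborel :: real measure)"
  define B where "B t \<rho> = {f \<in> space ?M. edist d t f \<le> \<rho>}" for t \<rho>
  define V where "V = unit_ball_vol (real d)"
  have V: "0 < V"
    by (simp add: V_def)
  have sets: "B t \<rho> \<in> sets ?M" for t \<rho>
    unfolding B_def edist_def by measurable
  have volume: "emeasure ?M (B t \<rho>) = ennreal (V * \<rho> ^ d)" if "0 < \<rho>" for t \<rho>
    unfolding B_def V_def using that by (rule emeasure_edist_ball)
  have "disjoint_family_on (\<lambda>t. B t (s/3)) T"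
  proof (unfold disjoint_family_on_def, intro ballI impI)
    fix t t' assume "t \<in> T" "t' \<in> T" "t \<noteq> t'"
    then have "s \<le> edist d t t'"
      using assms(3) by (simp add: separated_def)
    show "B t (s/3) \<inter> B t' (s/3) = {}"
    proof (rule equals0I)
      fix f assume "f \<in> B t (s/3) \<inter> B t' (s/3)"
      then have "edist d t f \<le> s/3" "edist d f t' \<le> s/3"
        by (simp_all add: B_def edist_commute[of d f])
      then show False
        using edist_triangle[of d t t' f] \<open>s \<le> edist d t t'\<close> assms(4) by linarith
    qed
  qed
  then have "(\<Sum>t\<in>T. emeasure ?M (B t (s/3))) = emeasure ?M (\<Union>t\<in>T. B t (s/3))"
    using sets assms(1) by (intro sum_emeasure) auto
  also have "\<dots> \<le> emeasure ?M (B c (R + s/3))"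
  proof (intro emeasure_mono sets subsetI)
    fix f assume "f \<in> (\<Union>t\<in>T. B t (s/3))"
    then obtain t where "t \<in> T" "f \<in> B t (s/3)"
      by blast
    moreover have "edist d c t \<le> R"
      using assms(2) \<open>t \<in> T\<close> by blast
    ultimately show "f \<in> B c (R + s/3)"
      using edist_triangle[of d c f t] by (simp add: B_def)
  qed
  finally have "ennreal (real (card T) * (V * (s/3) ^ d)) \<le> ennreal (V * (R + s/3) ^ d)"
    using assms(4,5) by (simp add: volume ennreal_mult' ennreal_of_nat_eq_real_of_nat)
  then have "V * (real (card T) * (s/3) ^ d) \<le> V * (R + s/3) ^ d"
    using V assms(4,5) by (subst (asm) ennreal_le_iff) (auto simp: algebra_simps)
  then show ?thesis
    using V by simp
qed

lemma maximal_separated_superset: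
  assumes "finite X" "Q \<subseteq> X" "separated d s Q" "0 < s"
  obtains U where "Q \<subseteq> U" "U \<subseteq> X" "separated d s U" "\<forall>x\<in>X. \<exists>u\<in>U. edist d u x < s"
proof -
  let ?F = "{U. Q \<subseteq> U \<and> U \<subseteq> X \<and> separated d s U}"
  have "card U < card X + 1" if "U \<in> ?F" for U
    using that card_mono[OF assms(1), of U] by simp
  then obtain U where U: "U \<in> ?F" and maximal: "\<And>V. V \<in> ?F \<Longrightarrow> card V \<le> card U"
    using ex_has_greatest_nat[of "\<lambda>U. U \<in> ?F" Q card "card X + 1"] assms(2,3) by auto
  have "\<exists>u\<in>U. edist d u x < s" if x: "x \<in> X" for x
  proof (rule ccontr)
    assume far: "\<not> ?thesis"
    then have "x \<notin> U"
      using assms(4) edist_self[of d x] by fastforce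
    moreover have "separated d s (insert x U)"
      using U far by (simp add: separated_def edist_commute[of d x] not_less)
    then have "insert x U \<in> ?F"
      using U x by blast
    moreover have "finite U"
      using U assms(1) finite_subset by blast
    ultimately show False
      using maximal[of "insert x U"] by simp
  qed
  with U show ?thesis
    using that by blast
qed

lemma net_containing_separated:
  assumes "finite P" "Q \<subseteq> P" "separated d \<epsilon> Q" "0 < \<epsilon>"
  obtains N where "is_net d \<epsilon> N P" "Q \<subseteq> N"
proof -
  obtain N where "Q \<subseteq> N" "N \<subseteq> P" "separated d \<epsilon> N" "\<forall>x\<in>P. \<exists>u\<in>N. edist d u x < \<epsilon>"
    using maximal_separated_superset[OF assms] .
  then have "is_net d \<epsilon> N P"
    unfolding is_net_def separated_def by (metis edist_commute less_eq_real_def)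
  with \<open>Q \<subseteq> N\<close> show ?thesis
    using that by blast
qed

lemma card_separated_near_le_frac_dim:
  assumes "frac_dim_bound d \<delta> c0 P" "finite P" "P \<subseteq> Rd d" "Q \<subseteq> P"
    "separated d \<epsilon> Q" "0 < \<epsilon>" "x \<in> Rd d" "2 * \<epsilon> \<le> r"
  shows "real (card {q\<in>Q. edist d x q \<le> r}) \<le> c0 * (r / \<epsilon>) powr \<delta>"
proof -
  obtain N where N: "is_net d \<epsilon> N P" "Q \<subseteq> N"
    using net_containing_separated[OF assms(2,4,5,6)] .
  then have "finite N"
    using assms(2) by (auto simp: is_net_def intro: finite_subset)
  moreover have "{q\<in>Q. edist d x q \<le> r} \<subseteq> N \<inter> eball d x r"
    using N(2) assms(3,4) by (auto simp: eball_def)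
  ultimately have "card {q\<in>Q. edist d x q \<le> r} \<le> card (N \<inter> eball d x r)"
    by (simp add: card_mono)
  also have "real (card (N \<inter> eball d x r)) \<le> c0 * (r / \<epsilon>) powr \<delta>"
    using assms(1,6,7,8) N(1) unfolding frac_dim_bound_def by auto
  finally show ?thesis
    by simp
qed

lemma radius_attained:
  assumes "finite Q" "q' \<in> Q" "edist d q q' \<le> r"
  obtains p where "p \<in> Q" "edist d q p \<le> r"
    "{x\<in>Q. edist d q x \<le> edist d q p} = {x\<in>Q. edist d q x \<le> r}"
proof -
  let ?S = "{x\<in>Q. edist d q x \<le> r}"
  have "finite ?S"
    using assms(1) by simp
  moreover have "q' \<in> ?S"
    using assms(2,3) by simp
  ultimately have "Max (edist d q ` ?S) \<in> edist d q ` ?S"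
    by (intro Max_in) auto
  then obtain p where max: "Max (edist d q ` ?S) = edist d q p" and p: "p \<in> ?S"
    by (rule imageE)
  have farthest: "edist d q x \<le> edist d q p" if "x \<in> ?S" for x
    unfolding max[symmetric] using \<open>finite ?S\<close> that by simp
  have "edist d q x \<le> edist d q p \<longleftrightarrow> edist d q x \<le> r" if "x \<in> Q" for x
  proof
    assume "edist d q x \<le> edist d q p"
    with p show "edist d q x \<le> r"
      by simp
  next
    assume "edist d q x \<le> r"
    with that show "edist d q x \<le> edist d q p"
      by (intro farthest) simp
  qed
  then have "{x\<in>Q. edist d q x \<le> edist d q p} = ?S"
    by (intro Collect_cong) auto
  with p show ?thesis
    by (intro that) auto
qed

lemma smallest_ball_with_m_points:
  assumes "finite Q" "1 \<le> m" "m \<le> card Q"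
  obtains c r0 where "c \<in> Q" "m \<le> card {x\<in>Q. edist d c x \<le> r0}"
    "\<And>q r. q \<in> Q \<Longrightarrow> r < r0 \<Longrightarrow> card {x\<in>Q. edist d q x \<le> r} < m"
proof -
  define S where "S q r = {x\<in>Q. edist d q x \<le> r}" for q r
  define G where "G = {(q, p) \<in> Q \<times> Q. m \<le> card (S q (edist d q p))}"
  have "finite G"
    using assms(1) by (auto simp: G_def intro: finite_subset[of _ "Q \<times> Q"])
  have "Q \<noteq> {}"
    using assms(2,3) by auto
  then obtain q0 where q0: "q0 \<in> Q"
    by blast
  let ?R = "Max (edist d q0 ` Q)"
  have far: "edist d q0 x \<le> ?R" if "x \<in> Q" for x
    using assms(1) that by simp
  then have "S q0 ?R = Q"
    by (auto simp: S_def)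
  moreover obtain p0 where "p0 \<in> Q" "S q0 (edist d q0 p0) = S q0 ?R"
    using radius_attained[OF assms(1) q0 far[OF q0]] unfolding S_def by blast
  ultimately have "(q0, p0) \<in> G"
    using q0 assms(3) by (simp add: G_def)
  define r0 where "r0 = Min ((\<lambda>(q, p). edist d q p) ` G)"
  have "r0 \<in> (\<lambda>(q, p). edist d q p) ` G"
    unfolding r0_def using \<open>finite G\<close> \<open>(q0, p0) \<in> G\<close> by (intro Min_in) auto
  then obtain c p where "(c, p) \<in> G" "r0 = edist d c p"
    by auto
  then have "c \<in> Q" "m \<le> card (S c r0)"
    by (auto simp: G_def)
  moreover have "card (S q r) < m" if q: "q \<in> Q" and r: "r < r0" for q r
  proof (rule ccontr)
    assume "\<not> card (S q r) < m"
    then have many: "m \<le> card (S q r)"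
      by simp
    then have "S q r \<noteq> {}"
      using assms(2) by auto
    then obtain q' where "q' \<in> S q r"
      by blast
    then obtain p where p: "p \<in> Q" "edist d q p \<le> r" "S q (edist d q p) = S q r"
      using radius_attained[OF assms(1), of q' d q r] unfolding S_def by auto
    then have "(q, p) \<in> G"
      using q many by (simp add: G_def)
    then have "r0 \<le> edist d q p"
      unfolding r0_def using \<open>finite G\<close> by (intro Min_le) auto
    with p(2) r show False
      by simp
  qed
  ultimately show ?thesis
    using that unfolding S_def by blast
qed

lemma card_half_separated_le:
  assumes "finite T" "\<forall>t\<in>T. edist d c t \<le> 2 * r0 + 1" "separated d (r0/2) T" "2 \<le> r0"
  shows "real (card T) \<le> 16 ^ d"
proof -
  have "real (card T) * (r0/2/3) ^ d \<le> (2 * r0 + 1 + r0/2/3) ^ d"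
    using assms by (intro card_separated_in_ball_le) auto
  also have "\<dots> \<le> (16 * (r0/2/3)) ^ d"
    using assms(4) by (intro power_mono) auto
  also have "\<dots> = 16 ^ d * (r0/2/3) ^ d"
    by (rule power_mult_distrib)
  finally show ?thesis
    using assms(4) by (simp add: mult_le_cancel_right)
qed

text \<open>The ball is covered by the balls of radius r0/2 around a maximal (r0/2)-separated subset; by
  minimality of r0 each of them holds fewer than m points, and by packing there are at most 16^d.\<close>

lemma card_double_ball_le:
  assumes "finite Q" "2 \<le> r0"
    "\<And>q r. q \<in> Q \<Longrightarrow> r < r0 \<Longrightarrow> card {x\<in>Q. edist d q x \<le> r} < m"
  shows "real (card {x\<in>Q. edist d c x \<le> 2 * r0 + 1}) \<le> 16 ^ d * real (m - 1)"
proof -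
  define S where "S q r = {x\<in>Q. edist d q x \<le> r}" for q r
  have finite_ball: "finite (S c (2 * r0 + 1))"
    using assms(1) by (simp add: S_def)
  moreover have "separated d (r0/2) {}"
    by (simp add: separated_def)
  ultimately obtain T where T: "T \<subseteq> S c (2 * r0 + 1)" "separated d (r0/2) T"
      "\<forall>x\<in>S c (2 * r0 + 1). \<exists>t\<in>T. edist d t x < r0/2"
    using maximal_separated_superset[of "S c (2 * r0 + 1)" "{}" d "r0/2"] assms(2) by auto
  have "finite T"
    using T(1) finite_ball by (rule finite_subset)
  have card_T: "real (card T) \<le> 16 ^ d"
    using T(1,2) \<open>finite T\<close> assms(2) by (intro card_half_separated_le) (auto simp: S_def)
  have "S c (2 * r0 + 1) \<subseteq> (\<Union>t\<in>T. S t (r0/2))"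
  proof
    fix x assume x: "x \<in> S c (2 * r0 + 1)"
    then obtain t where "t \<in> T" "edist d t x < r0/2"
      using T(3) by blast
    with x have "x \<in> S t (r0/2)"
      by (simp add: S_def)
    with \<open>t \<in> T\<close> show "x \<in> (\<Union>t\<in>T. S t (r0/2))"
      by blast
  qed
  then have "card (S c (2 * r0 + 1)) \<le> card (\<Union>t\<in>T. S t (r0/2))"
    using assms(1) \<open>finite T\<close> by (intro card_mono) (auto simp: S_def)
  also have "\<dots> \<le> (\<Sum>t\<in>T. card (S t (r0/2)))"
    by (rule card_UN_le[OF \<open>finite T\<close>])
  also have "\<dots> \<le> (\<Sum>t\<in>T. m - 1)"
  proof (rule sum_mono)
    fix t assume "t \<in> T"
    then have "t \<in> Q"
      using T(1) by (auto simp: S_def)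
    then have "card (S t (r0/2)) < m"
      unfolding S_def using assms(2) by (intro assms(3)) auto
    then show "card (S t (r0/2)) \<le> m - 1"
      by simp
  qed
  also have "\<dots> = card T * (m - 1)"
    by simp
  finally have "real (card (S c (2 * r0 + 1))) \<le> real (card T) * real (m - 1)"
    by (metis of_nat_le_iff of_nat_mult)
  also have "\<dots> \<le> 16 ^ d * real (m - 1)"
    using card_T by (intro mult_right_mono) auto
  finally show ?thesis
    by (simp add: S_def)
qed

lemma exists_le_average:
  fixes f :: "nat \<Rightarrow> real"
  assumes "(\<Sum>j<J. f j) \<le> M" "0 < J"
  obtains j where "j < J" "f j * real J \<le> M"
proof -
  have "\<exists>j<J. f j * real J \<le> M"
  proof (rule ccontr)
    assume "\<not> ?thesis"
    then have "(\<Sum>j<J. M) < (\<Sum>j<J. f j * real J)"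
      using assms(2) by (intro sum_strict_mono) auto
    also have "\<dots> \<le> M * real J"
      using assms(1) by (simp add: sum_distrib_right[symmetric] mult_right_mono)
    finally show False
      by (simp add: mult.commute)
  qed
  with that show ?thesis
    by blast
qed

lemma sparse_shell:
  fixes f :: "'a \<Rightarrow> real"
  assumes "finite Q" "0 \<le> r0"
  obtains r where "r0 \<le> r" "r \<le> 2 * r0"
    "real (card {x\<in>Q. \<bar>f x - r\<bar> \<le> 1}) * max 1 (r0/3) \<le> real (card {x\<in>Q. f x \<le> 2 * r0 + 1})"
proof -
  define J where "J = nat \<lfloor>r0/3\<rfloor> + 1"
  define H where "H j = {x\<in>Q. \<bar>f x - (r0 + 3 * real j)\<bar> \<le> 1}" for j
  define M where "M = card {x\<in>Q. f x \<le> 2 * r0 + 1}"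
  have floor: "real (nat \<lfloor>r0/3\<rfloor>) = of_int \<lfloor>r0/3\<rfloor>"
    using assms(2) by simp
  have J: "max 1 (r0/3) \<le> real J"
    unfolding J_def using floor by linarith
  have radius: "r0 + 3 * real j \<le> 2 * r0" if "j < J" for j
  proof -
    have "real j \<le> of_int \<lfloor>r0/3\<rfloor>"
      using that floor by (simp add: J_def)
    then show ?thesis
      by linarith
  qed
  have "(\<Sum>j<J. card (H j)) = card (\<Union>j<J. H j)"
  proof (rule card_UN_disjoint[symmetric])
    show "\<forall>i\<in>{..<J}. \<forall>j\<in>{..<J}. i \<noteq> j \<longrightarrow> H i \<inter> H j = {}"
    proof (intro ballI impI)
      fix i j :: nat assume "i \<noteq> j"
      then have "1 \<le> \<bar>real i - real j\<bar>"
        by (cases "i < j") auto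
      then show "H i \<inter> H j = {}"
        by (auto simp: H_def)
    qed
  qed (use assms(1) in \<open>auto simp: H_def\<close>)
  also have "\<dots> \<le> M"
  proof -
    have "H j \<subseteq> {x\<in>Q. f x \<le> 2 * r0 + 1}" if "j < J" for j
      using radius[OF that] by (auto simp: H_def)
    then show ?thesis
      unfolding M_def using assms(1) by (intro card_mono) auto
  qed
  finally have "(\<Sum>j<J. real (card (H j))) \<le> real M"
    by (metis of_nat_le_iff of_nat_sum)
  then obtain j where j: "j < J" "real (card (H j)) * real J \<le> real M"
    using exists_le_average[of "\<lambda>j. real (card (H j))" J "real M"] by (auto simp: J_def)
  have "real (card (H j)) * max 1 (r0/3) \<le> real (card (H j)) * real J"
    using J by (intro mult_left_mono) auto
  with j radius[OF j(1)] show ?thesis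
    by (intro that[of "r0 + 3 * real j"]) (auto simp: H_def M_def)
qed

lemma sphere_with_sparse_shell:
  assumes "finite Q" "separated d 2 Q" "2 \<le> m" "m \<le> card Q"
  obtains c r0 r where "c \<in> Q" "2 \<le> r0" "r0 \<le> r" "r \<le> 2 * r0"
    "m \<le> card {x\<in>Q. edist d c x \<le> r0}"
    "real (card {x\<in>Q. edist d c x \<le> 2 * r0 + 1}) \<le> 16 ^ d * real (m - 1)"
    "real (card {x\<in>Q. \<bar>edist d c x - r\<bar> \<le> 1}) * max 1 (r0/3)
      \<le> real (card {x\<in>Q. edist d c x \<le> 2 * r0 + 1})"
proof -
  obtain c r0 where c: "c \<in> Q" and many: "m \<le> card {x\<in>Q. edist d c x \<le> r0}"
    and minimal: "\<And>q r. q \<in> Q \<Longrightarrow> r < r0 \<Longrightarrow> card {x\<in>Q. edist d q x \<le> r} < m"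
    using smallest_ball_with_m_points[OF assms(1) _ assms(4)] assms(3) by auto
  have "\<not> {x\<in>Q. edist d c x \<le> r0} \<subseteq> {c}"
  proof
    assume "{x\<in>Q. edist d c x \<le> r0} \<subseteq> {c}"
    then have "card {x\<in>Q. edist d c x \<le> r0} \<le> 1"
      using card_mono[of "{c}"] by simp
    with many assms(3) show False
      by simp
  qed
  then obtain x where "x \<in> Q" "edist d c x \<le> r0" "x \<noteq> c"
    by auto
  with c assms(2) have "2 \<le> edist d c x"
    by (simp add: separated_def)
  with \<open>edist d c x \<le> r0\<close> have r0: "2 \<le> r0"
    by simp
  obtain r where "r0 \<le> r" "r \<le> 2 * r0"
    "real (card {x\<in>Q. \<bar>edist d c x - r\<bar> \<le> 1}) * max 1 (r0/3)
      \<le> real (card {x\<in>Q. edist d c x \<le> 2 * r0 + 1})"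
    using sparse_shell[OF assms(1), of r0 "edist d c"] r0 by auto
  then show ?thesis
    using that[OF c r0 _ _ many card_double_ball_le[OF assms(1) r0 minimal]] by blast
qed

lemma shell_ratio_le_powr:
  fixes k m M J \<rho> B c0 \<delta> :: real
  assumes "0 < \<delta>" "0 < k" "0 < B" "k / (2 * B) \<le> m" "m \<le> c0 * (\<rho>/2) powr \<delta>" "0 < \<rho>"
    "M \<le> k" "\<rho>/4 \<le> J"
  shows "M / J \<le> 2 * (2 * B * \<bar>c0\<bar>) powr (1/\<delta>) * k powr (1 - 1/\<delta>)"
proof -
  have "0 < k / (2 * B)"
    using assms(2,3) by simp
  with assms(4,5) have "0 < c0 * (\<rho>/2) powr \<delta>"
    by linarith
  with assms(6) have "0 < c0"
    by (simp add: zero_less_mult_iff)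
  define a where "a = k / (2 * B * c0)"
  have "0 < a"
    using assms(2,3) \<open>0 < c0\<close> by (simp add: a_def)
  have "a = k / (2 * B) / c0"
    by (simp add: a_def)
  also have "\<dots> \<le> m / c0"
    using assms(4) \<open>0 < c0\<close> by (intro divide_right_mono) auto
  also have "\<dots> \<le> (\<rho>/2) powr \<delta>"
    using assms(5) \<open>0 < c0\<close> by (simp add: divide_le_eq mult.commute)
  finally have "a powr (1/\<delta>) \<le> ((\<rho>/2) powr \<delta>) powr (1/\<delta>)"
    using \<open>0 < a\<close> assms(1) by (intro powr_mono2) auto
  also have "\<dots> = \<rho>/2"
    using assms(1,6) by (simp add: powr_powr)
  finally have root: "a powr (1/\<delta>) \<le> \<rho>/2" .
  have "M / J \<le> k / (\<rho>/4)"
    using assms(2,6,7,8) by (intro frac_le) auto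
  also have "\<dots> = 2 * k / (\<rho>/2)"
    by simp
  also have "\<dots> \<le> 2 * k / a powr (1/\<delta>)"
    using root \<open>0 < a\<close> assms(2,6) by (intro divide_left_mono) auto
  also have "\<dots> = 2 * (2 * B * c0) powr (1/\<delta>) * k powr (1 - 1/\<delta>)"
    using assms(2,3) \<open>0 < c0\<close>
    by (simp add: a_def powr_divide powr_diff field_simps)
  finally show ?thesis
    using \<open>0 < c0\<close> by simp
qed

lemma shell_ratio_le_linear:
  fixes M J R c0 \<delta> :: real
  assumes "\<delta> \<le> 1" "2 \<le> R" "M \<le> c0 * (R/2) powr \<delta>" "R/2 \<le> 4 * J" "0 < J"
  shows "M / J \<le> 4 * \<bar>c0\<bar>"
proof -
  have "c0 * (R/2) powr \<delta> \<le> \<bar>c0\<bar> * (R/2) powr \<delta>"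
    by (intro mult_right_mono) auto
  with assms(3) have "M \<le> \<bar>c0\<bar> * (R/2) powr \<delta>"
    by linarith
  also have "\<dots> \<le> \<bar>c0\<bar> * (R/2) powr 1"
    using assms(1,2) by (intro mult_left_mono powr_mono) auto
  also have "\<dots> \<le> \<bar>c0\<bar> * (4 * J)"
    using assms(2,4) by (intro mult_left_mono) auto
  finally show ?thesis
    using assms(5) by (simp add: divide_le_eq mult_ac)
qed

lemma card_shell_le:
  assumes "0 < \<delta>" "finite P" "P \<subseteq> Rd d" "frac_dim_bound d \<delta> c0 P" "Q \<subseteq> P" "separated d 2 Q"
    "c \<in> Rd d" "2 \<le> r0" "1 \<le> m" "real (card Q) / (2 * 16 ^ d) \<le> real m"
    "m \<le> card {x\<in>Q. edist d c x \<le> r0}"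
    "real (card shell) * max 1 (r0/3) \<le> real (card {x\<in>Q. edist d c x \<le> 2 * r0 + 1})"
  shows "real (card shell) \<le> (if 1 < \<delta> then 2 * (2 * 16 ^ d * \<bar>c0\<bar>) powr (1/\<delta>)
    * real (card Q) powr (1 - 1/\<delta>) else 4 * \<bar>c0\<bar>)"
proof -
  let ?M = "card {x\<in>Q. edist d c x \<le> 2 * r0 + 1}"
  let ?J = "max 1 (r0/3)"
  have "finite Q"
    using assms(2,5) finite_subset by blast
  then have "?M \<le> card Q"
    by (intro card_mono) auto
  have "real (card shell) \<le> ?M / ?J"
    using assms(12) by (simp add: le_divide_eq)
  have near: "real (card {x\<in>Q. edist d c x \<le> r}) \<le> c0 * (r/2) powr \<delta>" if "4 \<le> r" for r
    using card_separated_near_le_frac_dim[OF assms(4,2,3,5,6) _ assms(7)] that by simp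
  show ?thesis
  proof (cases "1 < \<delta>")
    case True
    define \<rho> where "\<rho> = max r0 4"
    have "card {x\<in>Q. edist d c x \<le> r0} \<le> card {x\<in>Q. edist d c x \<le> \<rho>}"
      using \<open>finite Q\<close> by (intro card_mono) (auto simp: \<rho>_def)
    with assms(11) near[of \<rho>] have "real m \<le> c0 * (\<rho>/2) powr \<delta>"
      by (simp add: \<rho>_def)
    moreover have "0 < real (card Q)"
      using assms(9,11) \<open>?M \<le> card Q\<close> card_mono[OF \<open>finite Q\<close>, of "{x\<in>Q. edist d c x \<le> r0}"]
      by auto
    ultimately have "?M / ?J \<le> 2 * (2 * 16 ^ d * \<bar>c0\<bar>) powr (1/\<delta>) * real (card Q) powr (1 - 1/\<delta>)"
      using assms(1,10) \<open>?M \<le> card Q\<close>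
      by (intro shell_ratio_le_powr[where m = "real m" and \<rho> = \<rho>]) (auto simp: \<rho>_def)
    with \<open>real (card shell) \<le> ?M / ?J\<close> True show ?thesis
      by simp
  next
    case False
    have "?M / ?J \<le> 4 * \<bar>c0\<bar>"
      using near[of "2 * r0 + 1"] assms(8) False
      by (intro shell_ratio_le_linear[where R = "2 * r0 + 1" and \<delta> = \<delta>]) auto
    with \<open>real (card shell) \<le> ?M / ?J\<close> False show ?thesis
      by simp
  qed
qed

lemma card_sphere_hits_le_shell:
  assumes "finite Q"
  shows "card {x\<in>Q. eball d x 1 \<inter> esphere d c r \<noteq> {}} \<le> card {x\<in>Q. \<bar>edist d c x - r\<bar> \<le> 1}"
proof (intro card_mono subsetI)
  fix x assume "x \<in> {x\<in>Q. eball d x 1 \<inter> esphere d c r \<noteq> {}}"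
  then obtain y where "x \<in> Q" "edist d x y \<le> 1" "edist d c y = r"
    by (auto simp: eball_def esphere_def)
  moreover have "edist d c x \<le> edist d c y + edist d y x" "edist d c y \<le> edist d c x + edist d x y"
    by (rule edist_triangle)+
  ultimately show "x \<in> {x\<in>Q. \<bar>edist d c x - r\<bar> \<le> 1}"
    by (simp add: edist_commute[of d y x] abs_le_iff)
qed (use assms in simp)

lemma card_inside_sphere_le:
  assumes "finite Q" "Q \<subseteq> Rd d" "r \<le> R"
  shows "card {x\<in>Q. eball d x 1 \<subseteq> {y\<in>Rd d. edist d c y < r}} \<le> card {x\<in>Q. edist d c x \<le> R}"
proof (intro card_mono subsetI)
  fix x assume x: "x \<in> {x\<in>Q. eball d x 1 \<subseteq> {y\<in>Rd d. edist d c y < r}}"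
  then have "x \<in> eball d x 1"
    using assms(2) by (intro centre_in_eball) auto
  with x assms(3) show "x \<in> {x\<in>Q. edist d c x \<le> R}"
    by fastforce
qed (use assms in simp)

lemma card_outside_sphere_le:
  assumes "finite Q" "Q \<subseteq> Rd d" "R \<le> r"
  shows "card {x\<in>Q. eball d x 1 \<subseteq> {y\<in>Rd d. edist d c y > r}} \<le> card Q - card {x\<in>Q. edist d c x \<le> R}"
proof -
  have "{x\<in>Q. eball d x 1 \<subseteq> {y\<in>Rd d. edist d c y > r}} \<subseteq> Q - {x\<in>Q. edist d c x \<le> R}"
  proof
    fix x assume x: "x \<in> {x\<in>Q. eball d x 1 \<subseteq> {y\<in>Rd d. edist d c y > r}}"
    then have "x \<in> eball d x 1"
      using assms(2) by (intro centre_in_eball) auto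
    with x assms(3) show "x \<in> Q - {x\<in>Q. edist d c x \<le> R}"
      by fastforce
  qed
  then have "card {x\<in>Q. eball d x 1 \<subseteq> {y\<in>Rd d. edist d c y > r}} \<le> card (Q - {x\<in>Q. edist d c x \<le> R})"
    using assms(1) by (intro card_mono) auto
  also have "\<dots> = card Q - card {x\<in>Q. edist d c x \<le> R}"
    using assms(1) by (simp add: card_Diff_subset)
  finally show ?thesis .
qed

lemma nat_near_fraction:
  fixes B :: real
  assumes "1 \<le> B" "2 * B < real k"
  obtains m :: nat where "2 \<le> m" "m \<le> k" "real k / (2 * B) \<le> real m" "real m < real k / (2 * B) + 1"
proof
  let ?m = "nat \<lceil>real k / (2 * B)\<rceil>"
  have "real ?m = of_int \<lceil>real k / (2 * B)\<rceil>"
    using assms(1) by simp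
  then show m: "real k / (2 * B) \<le> real ?m" "real ?m < real k / (2 * B) + 1"
    by linarith+
  have "1 < real k / (2 * B)"
    using assms by (simp add: field_simps)
  with m(1) show "2 \<le> ?m"
    by linarith
  have "real k / (2 * B) \<le> real k / 2"
    using assms by (intro divide_left_mono) auto
  with assms m(2) show "?m \<le> k"
    by linarith
qed

lemma separator_many_points:
  assumes "0 < \<delta>" "finite P" "P \<subseteq> Rd d" "frac_dim_bound d \<delta> c0 P" "Q \<subseteq> P" "separated d 2 Q"
    "2 * 16 ^ d < card Q"
  obtains c r where "c \<in> Rd d" "0 < r"
    "real (card {x\<in>Q. eball d x 1 \<inter> esphere d c r \<noteq> {}})
      \<le> (if 1 < \<delta> then 2 * (2 * 16 ^ d * \<bar>c0\<bar>) powr (1/\<delta>) * real (card Q) powr (1 - 1/\<delta>)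
         else 4 * \<bar>c0\<bar>)"
    "real (card {x\<in>Q. eball d x 1 \<subseteq> {y\<in>Rd d. edist d c y < r}}) \<le> (1 - 1 / (2 * 16 ^ d)) * real (card Q)"
    "real (card {x\<in>Q. eball d x 1 \<subseteq> {y\<in>Rd d. edist d c y > r}}) \<le> (1 - 1 / (2 * 16 ^ d)) * real (card Q)"
proof -
  let ?k = "real (card Q)" and ?B = "16 ^ d :: real"
  have "finite Q" "Q \<subseteq> Rd d"
    using assms(2,3,5) finite_subset by auto
  have "real (2 * 16 ^ d) < ?k"
    using assms(7) by (simp only: of_nat_less_iff)
  then obtain m where m: "2 \<le> m" "m \<le> card Q" "?k / (2 * ?B) \<le> real m" "real m < ?k / (2 * ?B) + 1"
    using nat_near_fraction[of ?B "card Q"] by auto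
  then obtain c r0 r where c: "c \<in> Q" and r: "2 \<le> r0" "r0 \<le> r" "r \<le> 2 * r0"
    and many: "m \<le> card {x\<in>Q. edist d c x \<le> r0}"
    and double: "real (card {x\<in>Q. edist d c x \<le> 2 * r0 + 1}) \<le> ?B * real (m - 1)"
    and shell: "real (card {x\<in>Q. \<bar>edist d c x - r\<bar> \<le> 1}) * max 1 (r0/3)
      \<le> real (card {x\<in>Q. edist d c x \<le> 2 * r0 + 1})"
    using sphere_with_sparse_shell[OF \<open>finite Q\<close> assms(6) m(1,2)] by blast
  have "c \<in> Rd d"
    using c \<open>Q \<subseteq> Rd d\<close> by blast
  have "real (card {x\<in>Q. eball d x 1 \<inter> esphere d c r \<noteq> {}}) \<le> card {x\<in>Q. \<bar>edist d c x - r\<bar> \<le> 1}"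
    using card_sphere_hits_le_shell[OF \<open>finite Q\<close>] by simp
  also have "\<dots> \<le> (if 1 < \<delta> then 2 * (2 * ?B * \<bar>c0\<bar>) powr (1/\<delta>) * ?k powr (1 - 1/\<delta>) else 4 * \<bar>c0\<bar>)"
    using m by (intro card_shell_le[OF assms(1-6) \<open>c \<in> Rd d\<close> r(1) _ _ many shell]) auto
  finally have hits: "real (card {x\<in>Q. eball d x 1 \<inter> esphere d c r \<noteq> {}})
    \<le> (if 1 < \<delta> then 2 * (2 * ?B * \<bar>c0\<bar>) powr (1/\<delta>) * ?k powr (1 - 1/\<delta>) else 4 * \<bar>c0\<bar>)" .
  have "real (card {x\<in>Q. eball d x 1 \<subseteq> {y\<in>Rd d. edist d c y < r}})
      \<le> card {x\<in>Q. edist d c x \<le> 2 * r0 + 1}"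
    using card_inside_sphere_le[OF \<open>finite Q\<close> \<open>Q \<subseteq> Rd d\<close>, of r "2 * r0 + 1"] r by simp
  also have "\<dots> \<le> ?k / 2"
    using double m(1,4) by (simp add: of_nat_diff field_simps)
  also have "\<dots> \<le> (1 - 1 / (2 * ?B)) * ?k"
    using mult_right_mono[of 1 ?B ?k] by (simp add: field_simps)
  finally have inside: "real (card {x\<in>Q. eball d x 1 \<subseteq> {y\<in>Rd d. edist d c y < r}})
    \<le> (1 - 1 / (2 * ?B)) * ?k" .
  have "card {x\<in>Q. eball d x 1 \<subseteq> {y\<in>Rd d. edist d c y > r}} \<le> card Q - m"
    using card_outside_sphere_le[OF \<open>finite Q\<close> \<open>Q \<subseteq> Rd d\<close> r(2), of c] many by linarith
  then have "real (card {x\<in>Q. eball d x 1 \<subseteq> {y\<in>Rd d. edist d c y > r}}) \<le> ?k - real m"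
    using m(2) by linarith
  also have "\<dots> \<le> (1 - 1 / (2 * ?B)) * ?k"
    using m(3) by (simp add: algebra_simps)
  finally have outside: "real (card {x\<in>Q. eball d x 1 \<subseteq> {y\<in>Rd d. edist d c y > r}})
    \<le> (1 - 1 / (2 * ?B)) * ?k" .
  show ?thesis
    using r by (intro that[OF \<open>c \<in> Rd d\<close> _ hits inside outside]) simp
qed

lemma sphere_splitting_one_ball:
  assumes "Q \<subseteq> Rd d" "0 < d" "q \<in> Q"
  obtains c r where "c \<in> Rd d" "0 < r"
    "{x\<in>Q. eball d x 1 \<subseteq> {y\<in>Rd d. edist d c y < r}} \<subseteq> Q - {q}"
    "{x\<in>Q. eball d x 1 \<subseteq> {y\<in>Rd d. edist d c y > r}} \<subseteq> Q - {q}"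
proof -
  have "q \<in> Rd d"
    using assms(1,3) by blast
  define e where "e = q(0 := q 0 + 1)"
  have "e \<in> Rd d"
    using \<open>q \<in> Rd d\<close> assms(2) by (simp add: Rd_def e_def)
  have "(\<Sum>i<d. (q i - e i)\<^sup>2) = (\<Sum>i<d. if i = 0 then 1 else 0)"
    by (rule sum.cong) (auto simp: e_def)
  then have "edist d q e = 1"
    using assms(2) by (simp add: edist_def)
  with \<open>e \<in> Rd d\<close> have "e \<in> eball d q 1" "\<not> edist d q e < 1/2"
    by (simp_all add: eball_def)
  then have "{x\<in>Q. eball d x 1 \<subseteq> {y\<in>Rd d. edist d q y < 1/2}} \<subseteq> Q - {q}"
    by blast
  moreover have "q \<in> eball d q 1" "\<not> edist d q q > 1/2"
    using \<open>q \<in> Rd d\<close> by (simp_all add: centre_in_eball)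
  then have "{x\<in>Q. eball d x 1 \<subseteq> {y\<in>Rd d. edist d q y > 1/2}} \<subseteq> Q - {q}"
    by blast
  ultimately show ?thesis
    using that[OF \<open>q \<in> Rd d\<close>, of "1/2"] by simp
qed

lemma of_nat_le_iff_real_power: "real n \<le> 2 * 16 ^ d \<longleftrightarrow> n \<le> 2 * 16 ^ d"
  by (metis of_nat_le_iff of_nat_mult of_nat_numeral of_nat_power)

lemma separator_few_points:
  assumes "finite Q" "Q \<subseteq> Rd d" "0 < d" "card Q \<le> 2 * 16 ^ d"
  obtains c r where "c \<in> Rd d" "0 < r"
    "real (card {x\<in>Q. eball d x 1 \<inter> esphere d c r \<noteq> {}}) \<le> real (card Q)"
    "real (card {x\<in>Q. eball d x 1 \<subseteq> {y\<in>Rd d. edist d c y < r}}) \<le> (1 - 1 / (2 * 16 ^ d)) * real (card Q)"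
    "real (card {x\<in>Q. eball d x 1 \<subseteq> {y\<in>Rd d. edist d c y > r}}) \<le> (1 - 1 / (2 * 16 ^ d)) * real (card Q)"
proof (cases "Q = {}")
  case True
  have "(\<lambda>_. 0) \<in> Rd d"
    by (simp add: Rd_def)
  with True show ?thesis
    by (intro that[of "\<lambda>_. 0" 1]) auto
next
  case False
  let ?k = "real (card Q)"
  obtain q where "q \<in> Q"
    using False by blast
  then obtain c r where c: "c \<in> Rd d" "0 < r"
    and inside: "{x\<in>Q. eball d x 1 \<subseteq> {y\<in>Rd d. edist d c y < r}} \<subseteq> Q - {q}"
    and outside: "{x\<in>Q. eball d x 1 \<subseteq> {y\<in>Rd d. edist d c y > r}} \<subseteq> Q - {q}"
    using sphere_splitting_one_ball[OF assms(2,3)] by blast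
  have "1 \<le> card Q"
    using False assms(1) by (simp add: Suc_le_eq card_gt_0_iff)
  then have "real (card (Q - {q})) = ?k - 1"
    using \<open>q \<in> Q\<close> assms(1) by (simp add: card_Diff_singleton of_nat_diff)
  also have "\<dots> \<le> ?k - ?k / (2 * 16 ^ d)"
    using assms(4) by (simp add: of_nat_le_iff_real_power)
  also have "\<dots> = (1 - 1 / (2 * 16 ^ d)) * ?k"
    by (simp add: algebra_simps)
  finally have few: "real (card (Q - {q})) \<le> (1 - 1 / (2 * 16 ^ d)) * ?k" .
  have "card {x\<in>Q. eball d x 1 \<subseteq> {y\<in>Rd d. edist d c y < r}} \<le> card (Q - {q})"
    "card {x\<in>Q. eball d x 1 \<subseteq> {y\<in>Rd d. edist d c y > r}} \<le> card (Q - {q})"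
    "card {x\<in>Q. eball d x 1 \<inter> esphere d c r \<noteq> {}} \<le> card Q"
    using inside outside assms(1) by (simp_all add: card_mono)
  with few show ?thesis
    by (intro that[OF c]) linarith+
qed

lemma le_one_minus_two_powr:
  assumes "1 \<le> d" "x \<le> (1 - 1 / (2 * 16 ^ d)) * real k"
  shows "x \<le> (1 - 2 powr (- 5 * real d)) * real k"
proof -
  have "(2::real) powr (5 * real d) = 2 powr real (5 * d)"
    by (simp only: of_nat_mult of_nat_numeral)
  also have "\<dots> = 2 ^ (5 * d)"
    by (rule powr_realpow) simp
  also have "\<dots> = 2 ^ d * 16 ^ d"
    by (simp add: power_mult power_mult_distrib[symmetric])
  finally have "(2::real) powr (- 5 * real d) = 1 / (2 ^ d * 16 ^ d)"
    by (simp add: powr_minus divide_inverse)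
  also have "\<dots> \<le> 1 / (2 * 16 ^ d)"
    using assms(1) by (intro divide_left_mono mult_right_mono) (auto simp: self_le_power)
  finally have "(1 - 1 / (2 * 16 ^ d)) * real k \<le> (1 - 2 powr (- 5 * real d)) * real k"
    by (intro mult_right_mono) auto
  with assms(2) show ?thesis
    by linarith
qed

definition separator_const :: "nat \<Rightarrow> real \<Rightarrow> real \<Rightarrow> real" where
  "separator_const d \<delta> c0 = 2 * 16 ^ d + 2 * (2 * 16 ^ d * \<bar>c0\<bar>) powr (1/\<delta>) + 4 * \<bar>c0\<bar>"

lemma separator_const_pos: "0 < separator_const d \<delta> c0"
  by (simp add: separator_const_def add_pos_nonneg)

lemma le_separator_bound_few:
  assumes "x \<le> real k" "k \<le> 2 * 16 ^ d"
  shows "x \<le> (if 1 < \<delta> then separator_const d \<delta> c0 * real k powr (1 - 1/\<delta>) else separator_const d \<delta> c0)"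
proof (cases "k = 0")
  case True
  then show ?thesis
    using assms(1) separator_const_pos[of d \<delta> c0] by simp
next
  case False
  have "real k \<le> 2 * 16 ^ d"
    using assms(2) by (simp add: of_nat_le_iff_real_power)
  also have "\<dots> \<le> separator_const d \<delta> c0"
    by (simp add: separator_const_def)
  finally have "x \<le> separator_const d \<delta> c0"
    using assms(1) by linarith
  moreover have "separator_const d \<delta> c0 \<le> separator_const d \<delta> c0 * real k powr (1 - 1/\<delta>)" if "1 < \<delta>"
  proof -
    have "1 \<le> real k powr (1 - 1/\<delta>)"
      using that False by (intro ge_one_powr_ge_zero) auto
    then show ?thesis
      using separator_const_pos[of d \<delta> c0] by (simp add: mult_le_cancel_left1)
  qed
  ultimately show ?thesis
    by (cases "1 < \<delta>") auto
qed

lemma le_separator_bound_many: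
  assumes "x \<le> (if 1 < \<delta> then 2 * (2 * 16 ^ d * \<bar>c0\<bar>) powr (1/\<delta>) * real k powr (1 - 1/\<delta>)
    else 4 * \<bar>c0\<bar>)"
  shows "x \<le> (if 1 < \<delta> then separator_const d \<delta> c0 * real k powr (1 - 1/\<delta>) else separator_const d \<delta> c0)"
proof (cases "1 < \<delta>")
  case True
  have "2 * (2 * 16 ^ d * \<bar>c0\<bar>) powr (1/\<delta>) * real k powr (1 - 1/\<delta>)
    \<le> separator_const d \<delta> c0 * real k powr (1 - 1/\<delta>)"
    by (intro mult_right_mono) (simp_all add: separator_const_def)
  with assms True show ?thesis
    by simp
next
  case False
  have "4 * \<bar>c0\<bar> \<le> separator_const d \<delta> c0"
    by (simp add: separator_const_def)
  with assms False show ?thesis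
    by simp
qed

lemma separator_exists:
  assumes "1 \<le> d" "0 < \<delta>" "finite P" "P \<subseteq> Rd d" "frac_dim_bound d \<delta> c0 P" "Q \<subseteq> P"
    "\<forall>x\<in>Q. \<forall>y\<in>Q. x \<noteq> y \<longrightarrow> eball d x 1 \<inter> eball d y 1 = {}"
  obtains c r where "c \<in> Rd d" "0 < r"
    "real (card {x\<in>Q. eball d x 1 \<inter> esphere d c r \<noteq> {}})
      \<le> (if 1 < \<delta> then separator_const d \<delta> c0 * real (card Q) powr (1 - 1/\<delta>)
         else separator_const d \<delta> c0)"
    "real (card {x\<in>Q. eball d x 1 \<subseteq> {y\<in>Rd d. edist d c y < r}}) \<le> (1 - 2 powr (- 5 * real d)) * real (card Q)"
    "real (card {x\<in>Q. eball d x 1 \<subseteq> {y\<in>Rd d. edist d c y > r}}) \<le> (1 - 2 powr (- 5 * real d)) * real (card Q)"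
proof -
  have "finite Q" "Q \<subseteq> Rd d"
    using assms(3,4,6) finite_subset by auto
  consider "card Q \<le> 2 * 16 ^ d" | "2 * 16 ^ d < card Q"
    by linarith
  then show ?thesis
  proof cases
    case 1
    have "0 < d"
      using assms(1) by simp
    then obtain c r where c: "c \<in> Rd d" "0 < r"
      and hits: "real (card {x\<in>Q. eball d x 1 \<inter> esphere d c r \<noteq> {}}) \<le> real (card Q)"
      and inside: "real (card {x\<in>Q. eball d x 1 \<subseteq> {y\<in>Rd d. edist d c y < r}})
        \<le> (1 - 1 / (2 * 16 ^ d)) * real (card Q)"
      and outside: "real (card {x\<in>Q. eball d x 1 \<subseteq> {y\<in>Rd d. edist d c y > r}})
        \<le> (1 - 1 / (2 * 16 ^ d)) * real (card Q)"
      using separator_few_points[OF \<open>finite Q\<close> \<open>Q \<subseteq> Rd d\<close> _ 1] by blast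
    show ?thesis
      by (rule that[OF c le_separator_bound_few[OF hits 1]
            le_one_minus_two_powr[OF assms(1) inside] le_one_minus_two_powr[OF assms(1) outside]])
  next
    case 2
    have "separated d 2 Q"
      using separated_if_disjoint_unit_eballs[OF \<open>Q \<subseteq> Rd d\<close> assms(7)] .
    then obtain c r where c: "c \<in> Rd d" "0 < r"
      and hits: "real (card {x\<in>Q. eball d x 1 \<inter> esphere d c r \<noteq> {}})
        \<le> (if 1 < \<delta> then 2 * (2 * 16 ^ d * \<bar>c0\<bar>) powr (1/\<delta>) * real (card Q) powr (1 - 1/\<delta>)
           else 4 * \<bar>c0\<bar>)"
      and inside: "real (card {x\<in>Q. eball d x 1 \<subseteq> {y\<in>Rd d. edist d c y < r}})
        \<le> (1 - 1 / (2 * 16 ^ d)) * real (card Q)"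
      and outside: "real (card {x\<in>Q. eball d x 1 \<subseteq> {y\<in>Rd d. edist d c y > r}})
        \<le> (1 - 1 / (2 * 16 ^ d)) * real (card Q)"
      using separator_many_points[OF assms(2-6) _ 2] by blast
    show ?thesis
      by (rule that[OF c le_separator_bound_many[OF hits]
            le_one_minus_two_powr[OF assms(1) inside] le_one_minus_two_powr[OF assms(1) outside]])
  qed
qed

theorem theorem11:
  shows "\<exists>A>0. \<forall>d::nat. \<forall>\<delta>::real. \<forall>c0::real.
    d \<ge> 2 \<longrightarrow> 0 < \<delta> \<longrightarrow> \<delta> \<le> real d \<longrightarrow>
    (\<exists>C>0. \<forall>P Q.
       finite P \<longrightarrow> P \<subseteq> Rd d \<longrightarrow> frac_dim_bound d \<delta> c0 P \<longrightarrow>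
       Q \<subseteq> P \<longrightarrow>
       (\<forall>x\<in>Q. \<forall>y\<in>Q. x \<noteq> y \<longrightarrow> eball d x 1 \<inter> eball d y 1 = {}) \<longrightarrow>
       (\<exists>c\<in>Rd d. \<exists>r>0.
          real (card {x\<in>Q. eball d x 1 \<inter> esphere d c r \<noteq> {}})
            \<le> (if \<delta> > 1 then C * real (card Q) powr (1 - 1 / \<delta>) else C) \<and>
          real (card {x\<in>Q. eball d x 1 \<subseteq> {y\<in>Rd d. edist d c y < r}})
            \<le> (1 - 2 powr (- A * real d)) * real (card Q) \<and>
          real (card {x\<in>Q. eball d x 1 \<subseteq> {y\<in>Rd d. edist d c y > r}})
            \<le> (1 - 2 powr (- A * real d)) * real (card Q)))"
  apply (rule exI[of _ 5], intro conjI allI impI)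
   apply simp
  subgoal for d \<delta> c0
    apply (rule exI[of _ "separator_const d \<delta> c0"], intro conjI allI impI separator_const_pos)
    apply (rule separator_exists[of d \<delta>], simp, assumption+)
    apply (intro bexI exI conjI; assumption)
    done
  done

end
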